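(* Let $H_1,H_2\in\mathcal O$, let $\lambda_1,\dots,\lambda_N$ be the eigenvalues of $H_2$ with corresponding orthonormal eigenvectors $\psi_1,\dots,\psi_N$, and assume: (i) $(H_1\psi_k,\psi_j)\neq0$ for all $k\neq j$; (ii) $\lambda_k-\lambda_l\neq\lambda_{k'}-\lambda_{l'}$ for all ordered pairs $(k,l)\neq(k',l')$ in $\{1,\dots,N\}^2$. Then: if $\mathrm{Tr}(H_1)=\mathrm{Tr}(H_2)=0$, $\mathcal L(H_1,H_2)$ equals the space of all traceless Hermitian operators on $\mathcal H$; otherwise $\mathcal L(H_1,H_2)=\mathcal O$.
   Context: $\mathcal H=\mathbb C^N$, $N>1$, with inner product $(\psi,\psi')=\sum_k\psi_k\bar\psi'_k$. $\mathcal O$ is the real vector space of Hermitian operators on $\mathcal H$, with bracket $\{A,B\}=i(AB-BA)\in\mathcal O$. $\mathcal L(H_1,H_2)$ is the real linear span of $H_1$, $H_2$ and all iterated brackets of them: $\{H_1,H_2\},\{H_1,\{H_1,H_2\}\},\{H_2,\{H_1,H_2\}\},\dots$ (i.e. the smallest real subspace containing $H_1,H_2$ and closed under $\{\cdot,\cdot\}$). *)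

theory Defs
  imports "HOL-Analysis.Analysis"
begin

text \<open>Operators on H = C^N are N x N complex matrices, with N = CARD('n).\<close>

definition hermitian :: "complex^'n^'n \<Rightarrow> bool" where
  "hermitian A \<longleftrightarrow> (\<forall>i j. A $ i $ j = cnj (A $ j $ i))"

definition cinner :: "complex^'n \<Rightarrow> complex^'n \<Rightarrow> complex" where
  "cinner x y = (\<Sum>k\<in>UNIV. x $ k * cnj (y $ k))"

definition lie_br :: "complex^'n^'n \<Rightarrow> complex^'n^'n \<Rightarrow> complex^'n^'n" where
  "lie_br A B = (\<chi> i j. \<i> * ((A ** B) $ i $ j - (B ** A) $ i $ j))"

definition rscale :: "real \<Rightarrow> complex^'n^'n \<Rightarrow> complex^'n^'n" where
  "rscale r A = (\<chi> i j. complex_of_real r * A $ i $ j)"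

inductive_set lie_gen :: "complex^'n^'n \<Rightarrow> complex^'n^'n \<Rightarrow> (complex^'n^'n) set"
  for H1 H2 where
  gen1: "H1 \<in> lie_gen H1 H2"
| gen2: "H2 \<in> lie_gen H1 H2"
| zero: "0 \<in> lie_gen H1 H2"
| add: "A \<in> lie_gen H1 H2 \<Longrightarrow> B \<in> lie_gen H1 H2 \<Longrightarrow> A + B \<in> lie_gen H1 H2"
| scale: "A \<in> lie_gen H1 H2 \<Longrightarrow> rscale r A \<in> lie_gen H1 H2"
| br: "A \<in> lie_gen H1 H2 \<Longrightarrow> B \<in> lie_gen H1 H2 \<Longrightarrow> lie_br A B \<in> lie_gen H1 H2"

end

theory Submission
  imports Defs
begin

text \<open>
  In an orthonormal eigenbasis of \<open>H2\<close> the map \<open>ad H2 = {H2, \<cdot>}\<close> multiplies the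
  \<open>(a, b)\<close> entry of a matrix by \<open>i (\<lambda>\<^sub>a - \<lambda>\<^sub>b)\<close>. As the gaps \<open>\<lambda>\<^sub>a - \<lambda>\<^sub>b\<close> are pairwise
  distinct, a real polynomial in \<open>(ad H2)\<^sup>2\<close> applied to \<open>H1\<close>, followed by \<open>ad H2\<close>, kills
  every entry except those at \<open>(k, l)\<close> and \<open>(l, k)\<close>; since these entries of \<open>H1\<close> are nonzero,
  one more \<open>ad H2\<close> produces a second, \<open>\<real>\<close>-independent Hermitian matrix with that support, so
  \<open>L(H1, H2)\<close> contains every Hermitian matrix supported on \<open>{(k, l), (l, k)}\<close>. Brackets of
  two of them give \<open>E\<^sub>k\<^sub>k - E\<^sub>l\<^sub>l\<close>, and together these span all traceless Hermitian matrices.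
  Brackets are themselves traceless, and a generator of nonzero trace supplies the missing
  direction.
\<close>

lemma rscale_eq_scaleR: "rscale r A = r *\<^sub>R A"
  by (simp add: rscale_def vec_eq_iff) (simp add: scaleR_conv_of_real)

lemma subspace_lie_gen: "subspace (lie_gen H1 H2)"
  by (rule subspaceI) (auto intro: lie_gen.intros simp flip: rscale_eq_scaleR)

lemma lie_gen_minimal:
  assumes "subspace S" "H1 \<in> S" "H2 \<in> S" "\<And>A B. A \<in> S \<Longrightarrow> B \<in> S \<Longrightarrow> lie_br A B \<in> S"
  shows "lie_gen H1 H2 \<subseteq> S"
proof
  show "X \<in> S" if "X \<in> lie_gen H1 H2" for X
    using that
    by induction (use assms in \<open>auto simp: rscale_eq_scaleR subspace_0 subspace_add subspace_mul\<close>)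
qed

lemma lie_gen_image_subset:
  assumes f: "linear f" and f_br: "\<And>A B. f (lie_br A B) = lie_br (f A) (f B)"
    and "X \<in> lie_gen H1 H2"
  shows "f X \<in> lie_gen (f H1) (f H2)"
  using assms(3)
  by induction
    (auto simp: linear_0[OF f] linear_add[OF f] linear_scale[OF f] f_br rscale_eq_scaleR
      intro: lie_gen.intros subspace_mul[OF subspace_lie_gen])

section \<open>Hermitian matrices and the bracket\<close>

definition cscale :: "complex \<Rightarrow> complex^'n^'m \<Rightarrow> complex^'n^'m" where
  "cscale c A = (\<chi> i j. c * A $ i $ j)"

definition ctranspose :: "complex^'n^'m \<Rightarrow> complex^'m^'n" where
  "ctranspose A = (\<chi> i j. cnj (A $ j $ i))"

lemma lie_br_eq_cscale: "lie_br A B = cscale \<i> (A ** B - B ** A)"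
  by (simp add: lie_br_def cscale_def)

lemma cscale_matrix_mult: "cscale c A ** B = cscale c (A ** B)"
  by (simp add: cscale_def matrix_matrix_mult_def vec_eq_iff sum_distrib_left mult.assoc)

lemma matrix_mult_cscale: "A ** cscale c B = cscale c (A ** B)"
  by (simp add: cscale_def matrix_matrix_mult_def vec_eq_iff sum_distrib_left mult_ac)

lemma hermitian_iff_ctranspose: "hermitian A \<longleftrightarrow> ctranspose A = A"
  unfolding hermitian_def ctranspose_def vec_eq_iff by (simp add: eq_commute)

lemma hermitian_cnj_entry: "hermitian Y \<Longrightarrow> cnj (Y $ j $ i) = Y $ i $ j"
  unfolding hermitian_def by (metis complex_cnj_cnj)

lemma ctranspose_ctranspose [simp]: "ctranspose (ctranspose A) = A"
  by (simp add: ctranspose_def vec_eq_iff)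

lemma ctranspose_matrix_mult: "ctranspose (A ** B) = ctranspose B ** ctranspose A"
  by (simp add: ctranspose_def matrix_matrix_mult_def vec_eq_iff mult.commute)

lemma ctranspose_cscale: "ctranspose (cscale c A) = cscale (cnj c) (ctranspose A)"
  by (simp add: ctranspose_def cscale_def vec_eq_iff)

lemma ctranspose_diff: "ctranspose (A - B) = ctranspose A - ctranspose B"
  by (simp add: ctranspose_def vec_eq_iff)

lemma ctranspose_add: "ctranspose (A + B) = ctranspose A + ctranspose B"
  by (simp add: ctranspose_def vec_eq_iff)

lemma ctranspose_scaleR: "ctranspose (r *\<^sub>R A) = r *\<^sub>R ctranspose A"
  unfolding ctranspose_def vec_eq_iff vector_scaleR_component by (simp add: scaleR_conv_of_real)

lemma ctranspose_lie_br: "ctranspose (lie_br A B) = lie_br (ctranspose A) (ctranspose B)"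
proof -
  have "cscale (- \<i>) (X - Y) = cscale \<i> (Y - X)" for X Y :: "complex^'n^'n"
    by (simp add: cscale_def vec_eq_iff algebra_simps)
  then show ?thesis
    unfolding lie_br_eq_cscale ctranspose_cscale ctranspose_diff ctranspose_matrix_mult complex_cnj_i .
qed

lemma hermitian_lie_br: "hermitian A \<Longrightarrow> hermitian B \<Longrightarrow> hermitian (lie_br A B)"
  by (simp add: hermitian_iff_ctranspose ctranspose_lie_br)

lemma trace_cscale: "trace (cscale c A) = c * trace A"
  by (simp add: trace_def cscale_def sum_distrib_left)

lemma trace_scaleR: "trace (r *\<^sub>R A) = complex_of_real r * trace (A :: complex^'n^'n)"
  unfolding trace_def vector_scaleR_component by (simp add: sum_distrib_left scaleR_conv_of_real)

lemma trace_lie_br: "trace (lie_br A B) = 0"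
  by (simp add: lie_br_eq_cscale trace_cscale trace_sub trace_mul_sym[of A B])

lemma hermitian_trace_real: "hermitian A \<Longrightarrow> trace A = complex_of_real (Re (trace A))"
proof -
  assume "hermitian A"
  then have "A $ i $ i \<in> \<real>" for i by (metis hermitian_cnj_entry Reals_cnj_iff)
  then have "trace A \<in> \<real>" unfolding trace_def by (intro sum_in_Reals) auto
  then show ?thesis by (simp add: complex_is_Real_iff)
qed

lemma subspace_hermitian: "subspace {A. hermitian A}"
  by (rule subspaceI) (auto simp: hermitian_iff_ctranspose ctranspose_add ctranspose_scaleR ctranspose_def vec_eq_iff)

lemma subspace_trace_zero: "subspace {A :: complex^'n^'n. trace A = 0}"
  by (rule subspaceI) (simp_all add: trace_add trace_scaleR trace_def[of 0])

lemma lie_gen_subset_hermitian: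
  "hermitian H1 \<Longrightarrow> hermitian H2 \<Longrightarrow> lie_gen H1 H2 \<subseteq> {A. hermitian A}"
  by (rule lie_gen_minimal[OF subspace_hermitian]) (simp_all add: hermitian_lie_br)

lemma lie_gen_subset_traceless_hermitian:
  assumes "hermitian H1" "hermitian H2" "trace H1 = 0" "trace H2 = 0"
  shows "lie_gen H1 H2 \<subseteq> {A. hermitian A \<and> trace A = 0}"
proof (rule lie_gen_minimal)
  show "subspace {A. hermitian A \<and> trace A = 0}"
    using subspace_inter[OF subspace_hermitian subspace_trace_zero] by (simp add: Int_def)
qed (use assms in \<open>simp_all add: hermitian_lie_br trace_lie_br\<close>)

lemma hermitian_mem_subspace_traceless:
  assumes S: "subspace S" and traceless: "{A. hermitian A \<and> trace A = 0} \<subseteq> S"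
    and H: "H \<in> S" "hermitian H" "trace H \<noteq> 0"
    and Y: "hermitian Y"
  shows "Y \<in> S"
proof -
  define s where "s = Re (trace Y) / Re (trace H)"
  have "Re (trace H) \<noteq> 0" using H(3) hermitian_trace_real[OF H(2)] by (metis of_real_0)
  then have "s * Re (trace H) = Re (trace Y)" by (simp add: s_def)
  then have "complex_of_real s * trace H = trace Y"
    using hermitian_trace_real[OF Y] hermitian_trace_real[OF H(2)] by (metis of_real_mult)
  then have "trace (Y - s *\<^sub>R H) = 0" by (simp add: trace_sub trace_scaleR)
  moreover have "hermitian (Y - s *\<^sub>R H)"
    using Y H(2) subspace_hermitian subspace_diff subspace_mul by fastforce
  ultimately have "Y - s *\<^sub>R H \<in> S" using traceless by blast
  then have "(Y - s *\<^sub>R H) + s *\<^sub>R H \<in> S" using S H(1) by (intro subspace_add subspace_mul)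
  then show ?thesis by simp
qed

lemma matrix_add_rdistrib: "(A + B) ** C = A ** C + B ** (C :: 'a::semiring_1^'n^'m)"
  by (simp add: matrix_matrix_mult_def vec_eq_iff sum.distrib distrib_right)

lemma matrix_diff_ldistrib: "A ** (B - C) = A ** B - A ** (C :: 'a::ring_1^'n^'m)"
  by (simp add: matrix_matrix_mult_def vec_eq_iff sum_subtractf right_diff_distrib)

lemma matrix_diff_rdistrib: "(A - B) ** C = A ** C - B ** (C :: 'a::ring_1^'n^'m)"
  by (simp add: matrix_matrix_mult_def vec_eq_iff sum_subtractf left_diff_distrib)

lemma linear_matrix_sandwich: "linear (\<lambda>X :: complex^'n^'n. W ** X ** V)"
  by (rule linearI)
    (simp_all add: matrix_add_ldistrib matrix_add_rdistrib matrix_scalar_ac scalar_matrix_assoc)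

lemma matrix_sandwich_lie_br:
  fixes V W :: "complex^'n^'n"
  assumes "V ** W = mat 1"
  shows "W ** lie_br A B ** V = lie_br (W ** A ** V) (W ** B ** V)"
proof -
  have "W ** (X ** Y) ** V = (W ** X ** V) ** (W ** Y ** V)" for X Y :: "complex^'n^'n"
    by (metis assms matrix_mul_assoc matrix_mul_rid)
  then show ?thesis
    by (simp add: lie_br_eq_cscale cscale_matrix_mult matrix_mult_cscale
        matrix_diff_ldistrib matrix_diff_rdistrib)
qed

lemma hermitian_matrix_sandwich:
  "hermitian X \<Longrightarrow> hermitian (ctranspose V ** X ** V)"
  by (simp add: hermitian_iff_ctranspose ctranspose_matrix_mult matrix_mul_assoc)

lemma trace_matrix_sandwich:
  fixes V W :: "complex^'n^'n"
  assumes "V ** W = mat 1"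
  shows "trace (W ** X ** V) = trace (X :: complex^'n^'n)"
  by (metis assms trace_mul_sym matrix_mul_assoc matrix_mul_lid)

section \<open>The case of a diagonal generator\<close>

definition diag_mat :: "('n \<Rightarrow> real) \<Rightarrow> complex^'n^'n" where
  "diag_mat lam = (\<chi> i j. if i = j then complex_of_real (lam i) else 0)"

definition hadamard :: "('n \<Rightarrow> 'm \<Rightarrow> complex) \<Rightarrow> complex^'m^'n \<Rightarrow> complex^'m^'n" where
  "hadamard w X = (\<chi> i j. w i j * X $ i $ j)"

lemma lie_br_diag_mat:
  "lie_br (diag_mat lam) X = hadamard (\<lambda>a b. \<i> * complex_of_real (lam a - lam b)) X"
proof -
  have "(diag_mat lam ** X) $ a $ b = complex_of_real (lam a) * X $ a $ b"
    and "(X ** diag_mat lam) $ a $ b = complex_of_real (lam b) * X $ a $ b" for a b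
    by (simp_all add: matrix_matrix_mult_def diag_mat_def if_distrib if_distribR cong: if_cong)
  then show ?thesis
    by (simp add: lie_br_def hadamard_def vec_eq_iff algebra_simps)
qed

lemma hadamard_poly_in_lie_gen:
  assumes "finite V" "X \<in> lie_gen H (diag_mat lam)"
  shows "hadamard (\<lambda>a b. complex_of_real (\<Prod>\<nu>\<in>V. \<nu> - (lam a - lam b)\<^sup>2)) X
           \<in> lie_gen H (diag_mat lam)"
  using assms
proof (induction V rule: finite_induct)
  case empty
  have "hadamard (\<lambda>a b. 1) X = X" by (simp add: hadamard_def vec_eq_iff)
  then show ?case using empty by simp
next
  case (insert \<nu> V)
  let ?X = "hadamard (\<lambda>a b. complex_of_real (\<Prod>\<nu>\<in>V. \<nu> - (lam a - lam b)\<^sup>2)) X"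
  have "lie_br (diag_mat lam) (lie_br (diag_mat lam) ?X) + \<nu> *\<^sub>R ?X \<in> lie_gen H (diag_mat lam)"
    using insert by (intro lie_gen.add lie_gen.br lie_gen.gen2 subspace_mul[OF subspace_lie_gen]) auto
  moreover have "lie_br (diag_mat lam) (lie_br (diag_mat lam) ?X) + \<nu> *\<^sub>R ?X =
      hadamard (\<lambda>a b. complex_of_real (\<Prod>\<nu>\<in>insert \<nu> V. \<nu> - (lam a - lam b)\<^sup>2)) X"
    using insert.hyps unfolding lie_br_diag_mat vec_eq_iff vector_add_component vector_scaleR_component
    by (simp add: hadamard_def scaleR_conv_of_real power2_eq_square algebra_simps)
  ultimately show ?case by simp
qed

definition herm_unit :: "'n \<Rightarrow> 'n \<Rightarrow> complex \<Rightarrow> complex^'n^'n" where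
  "herm_unit k l z = (\<chi> a b. if a = k \<and> b = l then z else if a = l \<and> b = k then cnj z else 0)"

lemma herm_unit_add: "herm_unit k l (z + w) = herm_unit k l z + herm_unit k l w"
  by (cases "k = l") (auto simp: herm_unit_def vec_eq_iff)

lemma herm_unit_of_real_mult: "herm_unit k l (complex_of_real r * z) = r *\<^sub>R herm_unit k l z"
  unfolding herm_unit_def vec_eq_iff vector_scaleR_component
  by (cases "k = l") (auto simp: scaleR_conv_of_real)

lemma lie_br_diag_mat_herm_unit:
  "lie_br (diag_mat lam) (herm_unit k l z) = herm_unit k l (\<i> * complex_of_real (lam k - lam l) * z)"
  unfolding lie_br_diag_mat by (cases "k = l") (auto simp: hadamard_def herm_unit_def vec_eq_iff algebra_simps)

lemma herm_unit_mem_subspace: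
  assumes S: "subspace S"
    and z0_in: "herm_unit k l z0 \<in> S" and iz0_in: "herm_unit k l (\<i> * complex_of_real \<mu> * z0) \<in> S"
    and "z0 \<noteq> 0" "\<mu> \<noteq> 0"
  shows "herm_unit k l z \<in> S"
proof -
  define t where "t = z / z0"
  have "complex_of_real (Re t) * z0 + complex_of_real (Im t / \<mu>) * (\<i> * complex_of_real \<mu> * z0)
      = (complex_of_real (Re t) + \<i> * complex_of_real (Im t)) * z0"
    using \<open>\<mu> \<noteq> 0\<close> by (simp add: algebra_simps)
  also have "\<dots> = z" using \<open>z0 \<noteq> 0\<close> by (simp add: complex_eq[symmetric] t_def)
  finally have z_eq: "complex_of_real (Re t) * z0
      + complex_of_real (Im t / \<mu>) * (\<i> * complex_of_real \<mu> * z0) = z" .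
  have "herm_unit k l z
      = Re t *\<^sub>R herm_unit k l z0 + (Im t / \<mu>) *\<^sub>R herm_unit k l (\<i> * complex_of_real \<mu> * z0)"
    by (simp only: herm_unit_add herm_unit_of_real_mult flip: z_eq)
  then show ?thesis
    using S z0_in iz0_in by (simp add: subspace_add subspace_mul)
qed

lemma herm_unit_in_lie_gen_diag:
  assumes herm: "hermitian A" and offdiag: "\<And>a b. a \<noteq> b \<Longrightarrow> A $ a $ b \<noteq> 0"
    and gaps: "\<And>a b a' b'. a \<noteq> b \<Longrightarrow> a' \<noteq> b' \<Longrightarrow> (a, b) \<noteq> (a', b') \<Longrightarrow>
                 lam a - lam b \<noteq> lam a' - lam b'"
    and kl: "k \<noteq> l"
  shows "herm_unit k l z \<in> lie_gen A (diag_mat lam)"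
proof -
  let ?L = "lie_gen A (diag_mat lam)"
  define \<mu> where "\<mu> = lam k - lam l"
  have "lam k - lam l \<noteq> lam l - lam k" using gaps[OF kl kl[symmetric]] kl by simp
  then have \<mu>: "\<mu> \<noteq> 0" by (simp add: \<mu>_def)
  define V where "V = (\<lambda>(a, b). (lam a - lam b)\<^sup>2) ` {(a, b). a \<noteq> b} - {\<mu>\<^sup>2}"
  define P where "P a b = (\<Prod>\<nu>\<in>V. \<nu> - (lam a - lam b)\<^sup>2)" for a b
  have "finite V" by (simp add: V_def)
  have P_vanish: "P a b = 0" if "a \<noteq> b" "(a, b) \<noteq> (k, l)" "(a, b) \<noteq> (l, k)" for a b
  proof -
    have "lam a - lam b \<noteq> \<mu>" "lam a - lam b \<noteq> - \<mu>"
      using gaps[OF that(1) kl that(2)] gaps[OF that(1) kl[symmetric] that(3)] by (simp_all add: \<mu>_def)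
    then have "(lam a - lam b)\<^sup>2 \<in> V"
      using that(1) by (auto simp: V_def power2_eq_iff)
    then show ?thesis using \<open>finite V\<close> by (auto simp: P_def prod_zero_iff)
  qed
  have P_kl: "P k l \<noteq> 0" using \<open>finite V\<close> by (auto simp: P_def prod_zero_iff V_def \<mu>_def)
  have P_lk: "P l k = P k l" by (simp add: P_def power2_commute)
  define z0 where "z0 = \<i> * complex_of_real \<mu> * complex_of_real (P k l) * A $ k $ l"
  have "z0 \<noteq> 0" using \<mu> P_kl offdiag[OF kl] by (simp add: z0_def)
  define X where "X = hadamard (\<lambda>a b. complex_of_real (P a b)) A"
  have "X \<in> ?L" unfolding X_def P_def using \<open>finite V\<close> by (intro hadamard_poly_in_lie_gen lie_gen.gen1)
  have ad_X: "lie_br (diag_mat lam) X $ a $ b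
      = \<i> * complex_of_real (lam a - lam b) * (complex_of_real (P a b) * A $ a $ b)" for a b
    by (simp add: lie_br_diag_mat hadamard_def X_def)
  have A_lk: "A $ l $ k = cnj (A $ k $ l)" using hermitian_cnj_entry[OF herm] by simp
  have "lie_br (diag_mat lam) X $ a $ b = herm_unit k l z0 $ a $ b" for a b
  proof -
    consider "a = b" | "a = k" "b = l" | "a = l" "b = k"
      | "a \<noteq> b" "(a, b) \<noteq> (k, l)" "(a, b) \<noteq> (l, k)" by blast
    then show ?thesis
    proof cases
      case 1
      have "\<not> (b = k \<and> b = l)" "\<not> (b = l \<and> b = k)" using kl by blast+
      then have "herm_unit k l z0 $ b $ b = 0"
        unfolding herm_unit_def vec_lambda_beta by (simp only: if_not_P if_False)
      then show ?thesis unfolding 1 by (simp add: ad_X)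
    next
      case 2
      show ?thesis unfolding 2 using kl by (simp add: ad_X herm_unit_def z0_def \<mu>_def)
    next
      case 3
      show ?thesis unfolding 3 using kl
        by (simp add: ad_X herm_unit_def z0_def \<mu>_def P_lk A_lk algebra_simps)
    next
      case 4
      then have "\<not> (a = k \<and> b = l)" "\<not> (a = l \<and> b = k)" by simp_all
      then have "herm_unit k l z0 $ a $ b = 0"
        unfolding herm_unit_def vec_lambda_beta by (simp only: if_not_P if_False)
      then show ?thesis by (simp add: ad_X P_vanish[OF 4])
    qed
  qed
  then have "lie_br (diag_mat lam) X = herm_unit k l z0" by (simp add: vec_eq_iff)
  then have "herm_unit k l z0 \<in> ?L" using lie_gen.br[OF lie_gen.gen2 \<open>X \<in> ?L\<close>] by simp
  moreover have "herm_unit k l (\<i> * complex_of_real \<mu> * z0) \<in> ?L"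
    using lie_gen.br[OF lie_gen.gen2 \<open>herm_unit k l z0 \<in> ?L\<close>]
    by (simp add: lie_br_diag_mat_herm_unit \<mu>_def)
  ultimately show ?thesis
    using \<open>z0 \<noteq> 0\<close> \<mu> by (rule herm_unit_mem_subspace[OF subspace_lie_gen])
qed

lemma herm_unit_mult_entry:
  assumes kl: "k \<noteq> l"
  shows "(herm_unit k l z ** B) $ i $ j
           = (if i = k then z * B $ l $ j else if i = l then cnj z * B $ k $ j else 0)"
proof -
  consider "i = k" | "i = l" | "i \<noteq> k" "i \<noteq> l" by blast
  then show ?thesis
  proof cases
    case 1
    have "herm_unit k l z $ k $ t * B $ t $ j = (if t = l then z * B $ l $ j else 0)" for t
      using kl by (simp add: herm_unit_def)
    then show ?thesis unfolding 1 by (simp add: matrix_matrix_mult_def)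
  next
    case 2
    have "herm_unit k l z $ l $ t * B $ t $ j = (if t = k then cnj z * B $ k $ j else 0)" for t
      using kl by (simp add: herm_unit_def)
    then show ?thesis unfolding 2 using kl by (simp add: matrix_matrix_mult_def)
  next
    case 3
    then show ?thesis by (simp add: matrix_matrix_mult_def herm_unit_def)
  qed
qed

lemma lie_br_herm_unit:
  assumes kl: "k \<noteq> l"
  shows "lie_br (herm_unit k l 1) (herm_unit k l \<i>)
           = 2 *\<^sub>R diag_mat (\<lambda>a. indicator {k} a - indicator {l} a)"
proof -
  have "lie_br (herm_unit k l 1) (herm_unit k l \<i>) $ i $ j
      = (2 *\<^sub>R diag_mat (\<lambda>a. indicator {k} a - indicator {l} a)) $ i $ j" for i j
    unfolding lie_br_def vec_lambda_beta herm_unit_mult_entry[OF kl] vector_scaleR_component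
    using kl by (cases "i = k"; cases "i = l"; cases "j = k"; cases "j = l")
      (simp_all add: herm_unit_def diag_mat_def scaleR_conv_of_real algebra_simps)
  then show ?thesis by (simp add: vec_eq_iff)
qed

lemma diag_mat_sum_zero_expansion:
  assumes "sum r UNIV = 0"
  shows "diag_mat r = (\<Sum>k\<in>UNIV. r k *\<^sub>R diag_mat (\<lambda>a. indicator {k} a - indicator {c} a))"
proof -
  have "diag_mat r $ i $ j
      = (\<Sum>k\<in>UNIV. r k *\<^sub>R diag_mat (\<lambda>a. indicator {k} a - indicator {c} a)) $ i $ j" for i j
  proof (cases "i = j")
    case True
    have "(\<Sum>k\<in>UNIV. r k * (indicator {k} i - indicator {c} i)) = r i - indicator {c} i * sum r UNIV"
      by (simp add: algebra_simps sum_subtractf sum_distrib_right indicator_def)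
    then have "complex_of_real (r i)
        = (\<Sum>k\<in>UNIV. complex_of_real (r k * (indicator {k} i - indicator {c} i)))"
      using assms by (simp only: of_real_sum[symmetric]) simp
    then show ?thesis
      unfolding sum_component vector_scaleR_component by (simp add: True diag_mat_def scaleR_conv_of_real)
  next
    case False
    then show ?thesis
      unfolding sum_component vector_scaleR_component by (simp add: diag_mat_def)
  qed
  then show ?thesis by (simp add: vec_eq_iff)
qed

lemma herm_unit_sum_entry:
  fixes Y :: "complex^'n^'n"
  assumes "hermitian Y"
  shows "(\<Sum>a\<in>UNIV. \<Sum>b\<in>UNIV. if a = b then 0 else herm_unit a b (Y $ a $ b)) $ i $ j
           = 2 * (if i = j then 0 else Y $ i $ j)"
proof -
  have entry: "(if a = b then 0 else herm_unit a b (Y $ a $ b)) $ i $ j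
      = (if a = i then if b = j then (if i = j then 0 else Y $ i $ j) else 0 else 0)
      + (if a = j then if b = i then (if i = j then 0 else Y $ i $ j) else 0 else 0)" for a b
    using hermitian_cnj_entry[OF assms] by (cases "i = j") (auto simp: herm_unit_def)
  have delta2: "(\<Sum>a\<in>UNIV. \<Sum>b\<in>UNIV. if a = p then if b = q then v else 0 else 0) = v"
    for p q :: 'n and v :: complex
    by (subst sum.swap) simp
  show ?thesis unfolding sum_component entry sum.distrib delta2 by simp
qed

lemma hermitian_offdiag_expansion:
  fixes Y :: "complex^'n^'n"
  assumes "hermitian Y"
  shows "Y = (1/2) *\<^sub>R (\<Sum>a\<in>UNIV. \<Sum>b\<in>UNIV. if a = b then 0 else herm_unit a b (Y $ a $ b))
             + diag_mat (\<lambda>a. Re (Y $ a $ a))"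
proof -
  have Y_diag: "complex_of_real (Re (Y $ a $ a)) = Y $ a $ a" for a
    using hermitian_cnj_entry[OF assms, of a a] by (metis Reals_cnj_iff complex_is_Real_iff of_real_Re)
  show ?thesis
    unfolding vec_eq_iff vector_add_component vector_scaleR_component herm_unit_sum_entry[OF assms]
    by (auto simp: diag_mat_def Y_diag scaleR_conv_of_real)
qed

lemma traceless_hermitian_in_lie_gen_diag:
  assumes herm: "hermitian A" and offdiag: "\<And>a b. a \<noteq> b \<Longrightarrow> A $ a $ b \<noteq> 0"
    and gaps: "\<And>a b a' b'. a \<noteq> b \<Longrightarrow> a' \<noteq> b' \<Longrightarrow> (a, b) \<noteq> (a', b') \<Longrightarrow>
                 lam a - lam b \<noteq> lam a' - lam b'"
    and Y: "hermitian Y" "trace Y = 0"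
  shows "Y \<in> lie_gen A (diag_mat lam)"
proof -
  let ?L = "lie_gen A (diag_mat lam)"
  have L: "subspace ?L" by (rule subspace_lie_gen)
  have herm_units: "(\<Sum>a\<in>UNIV. \<Sum>b\<in>UNIV. if a = b then 0 else herm_unit a b (Y $ a $ b)) \<in> ?L"
    using herm_unit_in_lie_gen_diag[OF herm offdiag gaps]
    by (intro subspace_sum[OF L]) (simp add: subspace_0[OF L])
  have diag_diff: "diag_mat (\<lambda>a. indicator {k} a - indicator {c} a) \<in> ?L" for k c
  proof (cases "k = c")
    case True
    then have "diag_mat (\<lambda>a. indicator {k} a - indicator {c} a) = 0"
      by (simp add: diag_mat_def vec_eq_iff)
    then show ?thesis using subspace_0[OF L] by simp
  next
    case False
    have "lie_br (herm_unit k c 1) (herm_unit k c \<i>) \<in> ?L"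
      using herm_unit_in_lie_gen_diag[OF herm offdiag gaps False] by (intro lie_gen.br)
    then show ?thesis
      using subspace_mul[OF L, of _ "1/2"] by (force simp: lie_br_herm_unit[OF False])
  qed
  have diag_sum: "(\<Sum>a\<in>UNIV. Re (Y $ a $ a)) = 0"
    using arg_cong[OF Y(2), of Re] by (simp add: trace_def)
  have "diag_mat (\<lambda>a. Re (Y $ a $ a)) \<in> ?L"
    unfolding diag_mat_sum_zero_expansion[OF diag_sum, of undefined]
    by (rule subspace_sum[OF L], rule subspace_mul[OF L], rule diag_diff)
  then show ?thesis
    by (subst hermitian_offdiag_expansion[OF Y(1)]) (intro subspace_add[OF L] subspace_mul[OF L] herm_units)
qed

section \<open>The eigenbasis of the second generator\<close>

definition basis_matrix :: "('n \<Rightarrow> complex^'m) \<Rightarrow> complex^'n^'m" where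
  "basis_matrix psi = (\<chi> i k. psi k $ i)"

lemma basis_matrix_sandwich_entry:
  "(ctranspose (basis_matrix psi) ** X ** basis_matrix psi) $ a $ b = cinner (X *v psi b) (psi a)"
  by (simp add: basis_matrix_def ctranspose_def matrix_matrix_mult_def matrix_vector_mult_def
      cinner_def sum_distrib_left sum_distrib_right mult_ac) (rule sum.swap)

lemma cinner_scaleR_left: "cinner (r *\<^sub>R x) y = complex_of_real r * cinner x y"
  unfolding cinner_def vector_scaleR_component by (simp add: scaleR_conv_of_real sum_distrib_left mult.assoc)

lemma traceless_hermitian_in_lie_gen:
  fixes H1 H2 :: "complex^'n^'n" and lam :: "'n \<Rightarrow> real" and psi :: "'n \<Rightarrow> complex^'n"
  assumes herm1: "hermitian H1"
    and eig: "\<And>k. H2 *v psi k = lam k *\<^sub>R psi k"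
    and orthonormal: "\<And>k j. cinner (psi k) (psi j) = (if k = j then 1 else 0)"
    and cond_i: "\<And>k j. k \<noteq> j \<Longrightarrow> cinner (H1 *v psi k) (psi j) \<noteq> 0"
    and cond_ii: "\<And>k l k' l'. k \<noteq> l \<Longrightarrow> k' \<noteq> l' \<Longrightarrow> (k, l) \<noteq> (k', l') \<Longrightarrow>
                    lam k - lam l \<noteq> lam k' - lam l'"
    and Y: "hermitian Y" "trace Y = 0"
  shows "Y \<in> lie_gen H1 H2"
proof -
  define U where "U = basis_matrix psi"
  define to_eigen where "to_eigen X = ctranspose U ** X ** U" for X
  define from_eigen where "from_eigen X = U ** X ** ctranspose U" for X
  have "(ctranspose U ** U) $ a $ b = mat 1 $ a $ b" for a b
    using basis_matrix_sandwich_entry[of psi "mat 1" a b] orthonormal[of b a]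
    by (simp add: U_def) (auto simp: mat_def)
  then have unitary: "ctranspose U ** U = mat 1" by (simp add: vec_eq_iff)
  then have unitary': "U ** ctranspose U = mat 1" by (rule matrix_left_right_inverse[THEN iffD1])
  have from_to: "from_eigen (to_eigen X) = X" for X
  proof -
    have "from_eigen (to_eigen X) = (U ** ctranspose U) ** X ** (U ** ctranspose U)"
      by (simp only: from_eigen_def to_eigen_def matrix_mul_assoc)
    then show ?thesis by (simp add: unitary')
  qed
  have "to_eigen H2 = diag_mat lam"
    using orthonormal
    by (simp add: vec_eq_iff to_eigen_def U_def basis_matrix_sandwich_entry eig cinner_scaleR_left diag_mat_def)
  moreover have "to_eigen Y \<in> lie_gen (to_eigen H1) (diag_mat lam)"
  proof (rule traceless_hermitian_in_lie_gen_diag)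
    show "hermitian (to_eigen H1)" "hermitian (to_eigen Y)"
      using herm1 Y(1) by (simp_all add: to_eigen_def hermitian_matrix_sandwich)
    show "to_eigen H1 $ a $ b \<noteq> 0" if "a \<noteq> b" for a b
      using cond_i that by (simp add: to_eigen_def U_def basis_matrix_sandwich_entry)
    show "trace (to_eigen Y) = 0"
      using Y(2) unitary' by (simp add: to_eigen_def trace_matrix_sandwich)
  qed (fact cond_ii)
  ultimately have "to_eigen Y \<in> lie_gen (to_eigen H1) (to_eigen H2)" by simp
  then have "from_eigen (to_eigen Y) \<in> lie_gen (from_eigen (to_eigen H1)) (from_eigen (to_eigen H2))"
    unfolding from_eigen_def
    by (rule lie_gen_image_subset[OF linear_matrix_sandwich matrix_sandwich_lie_br[OF unitary]])
  then show ?thesis by (simp add: from_to)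
qed

theorem mainTheorem5:
  fixes H1 H2 :: "complex^'n^'n"
    and lam :: "'n \<Rightarrow> real"
    and psi :: "'n \<Rightarrow> complex^'n"
  assumes N: "CARD('n) > 1"
    and herm1: "hermitian H1" and herm2: "hermitian H2"
    and eig: "\<And>k. H2 *v psi k = lam k *\<^sub>R psi k"
    and orthonormal: "\<And>k j. cinner (psi k) (psi j) = (if k = j then 1 else 0)"
    and cond_i: "\<And>k j. k \<noteq> j \<Longrightarrow> cinner (H1 *v psi k) (psi j) \<noteq> 0"
    and cond_ii: "\<And>k l k' l'. k \<noteq> l \<Longrightarrow> k' \<noteq> l' \<Longrightarrow> (k, l) \<noteq> (k', l') \<Longrightarrow>
                    lam k - lam l \<noteq> lam k' - lam l'"
  shows "(trace H1 = 0 \<and> trace H2 = 0 \<longrightarrow>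
            lie_gen H1 H2 = {A. hermitian A \<and> trace A = 0})
       \<and> (\<not> (trace H1 = 0 \<and> trace H2 = 0) \<longrightarrow>
            lie_gen H1 H2 = {A. hermitian A})"
proof (intro conjI impI)
  have traceless: "{A. hermitian A \<and> trace A = 0} \<subseteq> lie_gen H1 H2"
    using traceless_hermitian_in_lie_gen[OF herm1 eig orthonormal cond_i cond_ii] by blast
  show "lie_gen H1 H2 = {A. hermitian A \<and> trace A = 0}" if "trace H1 = 0 \<and> trace H2 = 0"
    using lie_gen_subset_traceless_hermitian[OF herm1 herm2] that traceless by blast
  show "lie_gen H1 H2 = {A. hermitian A}" if nonzero: "\<not> (trace H1 = 0 \<and> trace H2 = 0)"
  proof
    obtain H where "H \<in> {H1, H2}" "trace H \<noteq> 0" using nonzero by auto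
    then have "H \<in> lie_gen H1 H2" "hermitian H"
      using herm1 herm2 by (auto intro: lie_gen.gen1 lie_gen.gen2)
    then show "{A. hermitian A} \<subseteq> lie_gen H1 H2"
      using hermitian_mem_subspace_traceless[OF subspace_lie_gen traceless _ _ \<open>trace H \<noteq> 0\<close>]
      by blast
  qed (rule lie_gen_subset_hermitian[OF herm1 herm2])
qed

end
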